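(* Let $R$ be a commutative ring with identity in which the map $r \mapsto 2r$ is injective. Let $L_x, L_y \geq 1$, and let $f, g \in R[x,y]$ both have length $L_x$ in $x$ and length $L_y$ in $y$; write $h = fg$. Put $N = \lceil L_x/2 \rceil$. The polynomials $f(x,\pm x^N)$, $x^{N(L_y-1)}f(x,\pm x^{-N})$ and the analogous ones for $g$ lie in $R[x]$ and have length $N(L_y-1)+L_x$. Using the four products $h(x,\pm x^N) = f(x,\pm x^N)g(x,\pm x^N)$ and $x^{2N(L_y-1)}h(x,\pm x^{-N}) = x^{N(L_y-1)}f(x,\pm x^{-N})\cdot x^{N(L_y-1)}g(x,\pm x^{-N})$, the problem of computing $h = fg$ (the `four-point' Kronecker substitution) reduces to four multiplications of polynomials of length $\lceil L_x/2\rceil(L_y-1) + L_x$ in $R[x]$, plus $O(L_xL_y)$ additions/subtractions in $R$ and $O(L_xL_y)$ divisions by $2$ in $R$ (covering both forming the evaluations and recovering all coefficients of $h$).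
   Context: A polynomial $p \in R[x]$ is regarded as a vector of coefficients of a known length $\ell$ (the coefficient of $x^{\ell-1}$ may be zero). A bivariate $p \in R[x,y]$ is a rectangular array of coefficients with a length $\ell_x$ in $x$ and a length $\ell_y$ in $y$, written $p = \sum_{i=0}^{\ell_y-1} p_i(x) y^i$ with each $p_i \in R[x]$ of length $\ell_x$. The product $h = fg$ has length $2L_x - 1$ in $x$ and $2L_y-1$ in $y$. Division by $2$ means computing the unique $s$ with $2s = r$ for an element $r \in 2R$. *)

theory Defs
  imports "HOL-Computational_Algebra.Polynomial"
begin

text \<open>Bivariate polynomials over R are rendered as 'a poly poly:
  p = sum_i p_i(x) y^i, with p_i = coeff p i :: 'a poly.\<close>

definition has_len :: "nat \<Rightarrow> 'a::zero poly \<Rightarrow> bool" where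
  "has_len l p \<longleftrightarrow> (\<forall>j\<ge>l. coeff p j = 0)"

definition has_len2 :: "nat \<Rightarrow> nat \<Rightarrow> 'a::zero poly poly \<Rightarrow> bool" where
  "has_len2 lx ly p \<longleftrightarrow> (\<forall>i\<ge>ly. coeff p i = 0) \<and> (\<forall>i j. j \<ge> lx \<longrightarrow> coeff (coeff p i) j = 0)"

definition coeff_list :: "nat \<Rightarrow> 'a::zero poly \<Rightarrow> 'a list" where
  "coeff_list l p = map (coeff p) [0..<l]"

definition coeff_list2 :: "nat \<Rightarrow> nat \<Rightarrow> 'a::zero poly poly \<Rightarrow> 'a list" where
  "coeff_list2 lx ly p = concat (map (\<lambda>i. coeff_list lx (coeff p i)) [0..<ly])"

definition sub_pos :: "nat \<Rightarrow> 'a::comm_ring_1 \<Rightarrow> 'a poly poly \<Rightarrow> 'a poly" where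
  "sub_pos N s p = poly p (monom s N)"

text \<open>x^(N(l-1)) p(x, s x^(-N)) where p has length l in y (s = +1 or -1):
  literally sum_{i<l} p_i(x) s^i x^(N(l-1-i)).\<close>
definition sub_rev :: "nat \<Rightarrow> nat \<Rightarrow> 'a::comm_ring_1 \<Rightarrow> 'a poly poly \<Rightarrow> 'a poly" where
  "sub_rev N l s p = (\<Sum>i<l. smult (s ^ i) (coeff p i * monom 1 (N * (l - 1 - i))))"

text \<open>Division by 2: the unique s with 2 s = r (for r in 2R).\<close>
definition half :: "'a::comm_ring_1 \<Rightarrow> 'a" where
  "half r = (THE s. 2 * s = r)"

text \<open>The cost of a program is its number of instructions.\<close>
datatype instr = Add nat nat | Sub nat nat | Half nat

fun run :: "'a::comm_ring_1 list \<Rightarrow> instr list \<Rightarrow> 'a list" where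
  "run vs [] = vs"
| "run vs (Add i j # P) = run (vs @ [vs ! i + vs ! j]) P"
| "run vs (Sub i j # P) = run (vs @ [vs ! i - vs ! j]) P"
| "run vs (Half i # P) = run (vs @ [half (vs ! i)]) P"

definition slp_computes :: "instr list \<Rightarrow> nat list \<Rightarrow> 'a::comm_ring_1 list \<Rightarrow> 'a list \<Rightarrow> bool" where
  "slp_computes P outs inp res \<longleftrightarrow>
     (\<forall>k\<in>set outs. k < length inp + length P) \<and> map (\<lambda>k. run inp P ! k) outs = res"

end

theory Submission
  imports Defs
begin

(* Since f has length at most 2N in x, each coefficient of f(x, \<plusminus>x^N) and of
   x^(N(Ly-1)) f(x, \<plusminus>x^(-N)) is the sum of at most two signed coefficients of f, so the
   eight substitutions cost O(1) additions per coefficient. For the way back, the x^(Nk+j)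
   coefficients of h(x, x^N) and (-1)^k h(x, -x^N) agree on the rows of h of the parity of k and
   cancel on the others; as h has x-length 2Lx - 1 \<le> 4N, for j < 2N their sum is
   2 (h_{k,j} + h_{k-2,j+2N}). Running through the rows in increasing order, h_{k,j} is therefore
   obtained by one halving and one subtraction of an already recovered coefficient; the columns
   j \<ge> 2N are obtained in the same way from the reversed substitutions, where row k meets row
   k - 2 shifted by -2N. *)

section \<open>Straight-line programs compiled from expressions\<close>

lemma run_append: "run vs (P @ Q) = run (run vs P) Q"
  by (induction vs P rule: run.induct) auto

lemma run_extends: "\<exists>ws. run vs P = vs @ ws \<and> length ws = length P"
  by (induction vs P rule: run.induct) force+

lemma run_nth_prefix: "k < length vs \<Longrightarrow> run vs P ! k = vs ! k"
  by (metis nth_append run_extends)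

lemma length_run: "length (run vs P) = length vs + length P"
  using run_extends by (metis length_append)

lemma run_binary_instr:
  assumes step: "\<And>ws. run ws [ins i j] = ws @ [op (ws ! i) (ws ! j)]"
    and "i < length vs + length P" "run vs P ! i = x" "run (run vs P) Q ! j = y"
  shows "run vs (P @ Q @ [ins i j]) ! (length vs + length P + length Q) = op x y"
  using assms by (simp add: run_append step nth_append length_run run_nth_prefix)

datatype expr = Inp nat | Out nat | Zero | Plus expr expr | Minus expr expr | Halve expr

fun eval_expr :: "'a::comm_ring_1 list \<Rightarrow> 'a list \<Rightarrow> expr \<Rightarrow> 'a" where
  "eval_expr inp out (Inp i) = inp ! i"
| "eval_expr inp out (Out s) = out ! s"
| "eval_expr inp out Zero = 0"
| "eval_expr inp out (Plus a b) = eval_expr inp out a + eval_expr inp out b"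
| "eval_expr inp out (Minus a b) = eval_expr inp out a - eval_expr inp out b"
| "eval_expr inp out (Halve a) = half (eval_expr inp out a)"

fun refs_below :: "nat \<Rightarrow> nat \<Rightarrow> expr \<Rightarrow> bool" where
  "refs_below ni no (Inp i) \<longleftrightarrow> i < ni"
| "refs_below ni no (Out s) \<longleftrightarrow> s < no"
| "refs_below ni no Zero \<longleftrightarrow> True"
| "refs_below ni no (Plus a b) \<longleftrightarrow> refs_below ni no a \<and> refs_below ni no b"
| "refs_below ni no (Minus a b) \<longleftrightarrow> refs_below ni no a \<and> refs_below ni no b"
| "refs_below ni no (Halve a) \<longleftrightarrow> refs_below ni no a"

fun expr_cost :: "expr \<Rightarrow> nat" where
  "expr_cost (Inp i) = 0"
| "expr_cost (Out s) = 0"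
| "expr_cost Zero = 1"
| "expr_cost (Plus a b) = expr_cost a + expr_cost b + 1"
| "expr_cost (Minus a b) = expr_cost a + expr_cost b + 1"
| "expr_cost (Halve a) = expr_cost a + 1"

(* rs ! s is the register holding output s and n the number of registers in use; the result is
   the code together with the register that receives the value of the expression. Zero is
   register 0 minus itself, which is 0 even if there is no register 0. *)
fun compile_expr :: "nat list \<Rightarrow> nat \<Rightarrow> expr \<Rightarrow> instr list \<times> nat" where
  "compile_expr rs n (Inp i) = ([], i)"
| "compile_expr rs n (Out s) = ([], rs ! s)"
| "compile_expr rs n Zero = ([Sub 0 0], n)"
| "compile_expr rs n (Plus a b) =
     (let (P, i) = compile_expr rs n a; (Q, j) = compile_expr rs (n + length P) b
      in (P @ Q @ [Add i j], n + length P + length Q))"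
| "compile_expr rs n (Minus a b) =
     (let (P, i) = compile_expr rs n a; (Q, j) = compile_expr rs (n + length P) b
      in (P @ Q @ [Sub i j], n + length P + length Q))"
| "compile_expr rs n (Halve a) =
     (let (P, i) = compile_expr rs n a in (P @ [Half i], n + length P))"

fun compile_exprs :: "nat list \<Rightarrow> nat \<Rightarrow> expr list \<Rightarrow> instr list \<times> nat list" where
  "compile_exprs rs n [] = ([], rs)"
| "compile_exprs rs n (e # es) =
     (let (P, r) = compile_expr rs n e; (Q, rs') = compile_exprs (rs @ [r]) (n + length P) es
      in (P @ Q, rs'))"

lemma length_compile_expr: "length (fst (compile_expr rs n e)) = expr_cost e"
  by (induction e arbitrary: n) (simp_all add: case_prod_beta Let_def)

lemma length_compile_exprs: "length (fst (compile_exprs rs n es)) = (\<Sum>e\<leftarrow>es. expr_cost e)"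
  by (induction es arbitrary: rs n) (simp_all add: case_prod_beta Let_def length_compile_expr)

definition regs_hold :: "'a list \<Rightarrow> 'a list \<Rightarrow> nat list \<Rightarrow> 'a list \<Rightarrow> bool" where
  "regs_hold inp out rs vs \<longleftrightarrow>
     (\<exists>ws. vs = inp @ ws) \<and> (\<forall>s<length rs. rs ! s < length vs \<and> vs ! (rs ! s) = out ! s)"

lemma regs_hold_append: "regs_hold inp out rs vs \<Longrightarrow> regs_hold inp out rs (vs @ ws)"
  unfolding regs_hold_def by (auto simp: nth_append)

lemma regs_hold_run: "regs_hold inp out rs vs \<Longrightarrow> regs_hold inp out rs (run vs P)"
  using run_extends regs_hold_append by metis

lemma compile_expr_correct:
  assumes "refs_below (length inp) (length rs) e" "regs_hold inp out rs vs" "length vs = n"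
  shows "snd (compile_expr rs n e) < n + expr_cost e \<and>
    run vs (fst (compile_expr rs n e)) ! snd (compile_expr rs n e) = eval_expr inp out e"
  using assms
proof (induction e arbitrary: n vs)
  case (Inp i)
  then show ?case by (auto simp: regs_hold_def nth_append)
next
  case (Out s)
  then show ?case by (simp add: regs_hold_def)
next
  case Zero
  then show ?case by (simp add: nth_append)
next
  case (Plus a b)
  let ?A = "compile_expr rs n a" and ?vs = "run vs (fst (compile_expr rs n a))"
  let ?B = "compile_expr rs (n + expr_cost a) b"
  have "regs_hold inp out rs ?vs" "length ?vs = n + expr_cost a"
    using Plus.prems by (simp_all add: regs_hold_run length_run length_compile_expr)
  then have "snd ?B < n + expr_cost a + expr_cost b" "run ?vs (fst ?B) ! snd ?B = eval_expr inp out b"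
    using Plus.IH(2)[of ?vs] Plus.prems(1) by auto
  moreover have "snd ?A < n + expr_cost a" "?vs ! snd ?A = eval_expr inp out a"
    using Plus.IH(1)[of vs n] Plus.prems by auto
  ultimately show ?case
    using run_binary_instr[where op="(+)" and Q="fst ?B", of Add "snd ?A" "snd ?B" vs "fst ?A"] Plus.prems(3)
    by (simp add: case_prod_beta Let_def length_compile_expr)
next
  case (Minus a b)
  let ?A = "compile_expr rs n a" and ?vs = "run vs (fst (compile_expr rs n a))"
  let ?B = "compile_expr rs (n + expr_cost a) b"
  have "regs_hold inp out rs ?vs" "length ?vs = n + expr_cost a"
    using Minus.prems by (simp_all add: regs_hold_run length_run length_compile_expr)
  then have "snd ?B < n + expr_cost a + expr_cost b" "run ?vs (fst ?B) ! snd ?B = eval_expr inp out b"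
    using Minus.IH(2)[of ?vs] Minus.prems(1) by auto
  moreover have "snd ?A < n + expr_cost a" "?vs ! snd ?A = eval_expr inp out a"
    using Minus.IH(1)[of vs n] Minus.prems by auto
  ultimately show ?case
    using run_binary_instr[where op="(-)" and Q="fst ?B", of Sub "snd ?A" "snd ?B" vs "fst ?A"] Minus.prems(3)
    by (simp add: case_prod_beta Let_def length_compile_expr)
next
  case (Halve a)
  then show ?case
    by (simp add: case_prod_beta run_append length_run nth_append length_compile_expr)
qed

lemma compile_exprs_correct:
  assumes "regs_hold inp out rs vs" "length vs = n"
    and "\<forall>u<length es. refs_below (length inp) (length rs + u) (es ! u) \<and>
      eval_expr inp out (es ! u) = out ! (length rs + u)"
  shows "length (snd (compile_exprs rs n es)) = length rs + length es \<and>
    regs_hold inp out (snd (compile_exprs rs n es)) (run vs (fst (compile_exprs rs n es)))"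
  using assms
proof (induction es arbitrary: rs n vs)
  case Nil
  then show ?case by simp
next
  case (Cons e es)
  let ?A = "compile_expr rs n e" and ?vs = "run vs (fst (compile_expr rs n e))"
  have e: "refs_below (length inp) (length rs) e" "eval_expr inp out e = out ! length rs"
    using Cons.prems(3) by force+
  have "snd ?A < n + expr_cost e" "?vs ! snd ?A = out ! length rs"
    using compile_expr_correct[OF e(1) Cons.prems(1,2)] e(2) by auto
  then have "regs_hold inp out (rs @ [snd ?A]) ?vs"
    using regs_hold_run[OF Cons.prems(1), of "fst ?A"] Cons.prems(2)
    by (auto simp: regs_hold_def nth_append length_run length_compile_expr less_Suc_eq)
  moreover have "length ?vs = n + length (fst ?A)"
    using Cons.prems(2) by (simp add: length_run)
  moreover have "\<forall>u<length es. refs_below (length inp) (length (rs @ [snd ?A]) + u) (es ! u) \<and>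
      eval_expr inp out (es ! u) = out ! (length (rs @ [snd ?A]) + u)"
  proof (intro allI impI)
    fix u assume "u < length es"
    then show "refs_below (length inp) (length (rs @ [snd ?A]) + u) (es ! u) \<and>
      eval_expr inp out (es ! u) = out ! (length (rs @ [snd ?A]) + u)"
      using Cons.prems(3)[rule_format, of "Suc u"] by simp
  qed
  ultimately show ?case
    using Cons.IH by (simp add: case_prod_beta Let_def run_append)
qed

definition exprs_slp :: "nat \<Rightarrow> nat \<Rightarrow> (nat \<Rightarrow> expr) \<Rightarrow> instr list \<times> nat list" where
  "exprs_slp n m es = compile_exprs [] n (map es [0..<m])"

lemma exprs_slp_computes:
  assumes "length inp = n" "length out = m"
    and "\<forall>u<m. refs_below n u (es u) \<and> eval_expr inp out (es u) = out ! u"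
  shows "slp_computes (fst (exprs_slp n m es)) (snd (exprs_slp n m es)) inp out"
proof -
  have "regs_hold inp out [] inp"
    by (simp add: regs_hold_def)
  then have "length (snd (exprs_slp n m es)) = m \<and>
      regs_hold inp out (snd (exprs_slp n m es)) (run inp (fst (exprs_slp n m es)))"
    using compile_exprs_correct[of inp out "[]" inp n "map es [0..<m]"] assms
    unfolding exprs_slp_def by simp
  then show ?thesis
    using assms(1,2) unfolding slp_computes_def regs_hold_def
    by (auto simp: length_run in_set_conv_nth intro: nth_equalityI)
qed

lemma length_exprs_slp:
  assumes "\<forall>u<m. expr_cost (es u) \<le> c"
  shows "length (fst (exprs_slp n m es)) \<le> c * m"
proof -
  have "(\<Sum>u\<leftarrow>[0..<m]. expr_cost (es u)) \<le> (\<Sum>u\<leftarrow>[0..<m]. c)"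
    using assms by (intro sum_list_mono) simp
  then show ?thesis
    by (simp add: exprs_slp_def length_compile_exprs comp_def sum_list_triv mult.commute)
qed

section \<open>Coefficients of Kronecker substitutions\<close>

(* The coefficient of x^d in \<Sum>i<K. e\<^sub>i(x) x^(N i), where e i j is the coefficient of x^j in e\<^sub>i. *)
definition kronecker_coeff :: "nat \<Rightarrow> nat \<Rightarrow> (nat \<Rightarrow> nat \<Rightarrow> 'a::comm_monoid_add) \<Rightarrow> nat \<Rightarrow> 'a" where
  "kronecker_coeff N K e d = (\<Sum>i<K. if N * i \<le> d then e i (d - N * i) else 0)"

lemma kronecker_coeff_two_terms:
  fixes e :: "nat \<Rightarrow> nat \<Rightarrow> 'a::comm_monoid_add"
  assumes "j < N"
    and e_K: "\<And>i j. K \<le> i \<Longrightarrow> e i j = 0" and e_N: "\<And>i j. 2 * N \<le> j \<Longrightarrow> e i j = 0"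
  shows "kronecker_coeff N K e (N * k + j) = e k j + (if 1 \<le> k then e (k - 1) (j + N) else 0)"
proof -
  have summand: "(if N * i \<le> N * k + j then e i (N * k + j - N * i) else 0) =
      (if i = k then e k j else 0) + (if Suc i = k then e (k - 1) (j + N) else 0)" for i
  proof -
    consider "i = k" | "Suc i = k" | "k < i" | "Suc (Suc i) \<le> k" by linarith
    then show ?thesis
    proof cases
      case 2
      then have "N * k = N * i + N" by (auto simp: algebra_simps)
      with 2 show ?thesis by (auto simp: add.commute)
    next
      case 3
      then have "N * k + N \<le> N * i" using mult_le_mono2[of "Suc k" i N] by simp
      with 3 \<open>j < N\<close> show ?thesis by auto
    next
      case 4
      then have "N * i + 2 * N \<le> N * k" using mult_le_mono2[of "i + 2" k N] by (simp add: algebra_simps)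
      with 4 e_N[of "N * k + j - N * i" i] show ?thesis by auto
    qed simp
  qed
  have "kronecker_coeff N K e (N * k + j) =
      (\<Sum>i<K. if i = k then e k j else 0) + (\<Sum>i<K. if Suc i = k then e (k - 1) (j + N) else 0)"
    unfolding kronecker_coeff_def summand by (rule sum.distrib)
  also have "\<dots> = e k j + (if 1 \<le> k then e (k - 1) (j + N) else 0)"
    using e_K by (cases k) (auto simp: sum.delta sum.delta')
  finally show ?thesis .
qed

lemma kronecker_coeff_parity:
  fixes Q :: "nat \<Rightarrow> nat \<Rightarrow> 'a::comm_ring_1"
  assumes "j < 2 * N"
    and Q_K: "\<And>i j. K \<le> i \<Longrightarrow> Q i j = 0" and Q_N: "\<And>i j. 4 * N \<le> j \<Longrightarrow> Q i j = 0"
  shows "kronecker_coeff N K Q (N * k + j) + (-1) ^ k * kronecker_coeff N K (\<lambda>i j. (-1) ^ i * Q i j) (N * k + j)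
    = 2 * (Q k j + (if 2 \<le> k then Q (k - 2) (j + 2 * N) else 0))"
proof -
  let ?d = "N * k + j"
  have summand: "(if N * i \<le> ?d then Q i (?d - N * i) else 0) +
      (-1) ^ k * (if N * i \<le> ?d then (-1) ^ i * Q i (?d - N * i) else 0) =
      (if i = k then 2 * Q k j else 0) + (if i + 2 = k then 2 * Q (k - 2) (j + 2 * N) else 0)" for i
  proof -
    have "(if N * i \<le> ?d then Q i (?d - N * i) else 0) +
        (-1) ^ k * (if N * i \<le> ?d then (-1) ^ i * Q i (?d - N * i) else 0) =
        (if N * i \<le> ?d then (1 + (-1) ^ (i + k)) * Q i (?d - N * i) else 0)"
      by (simp add: power_add algebra_simps)
    also have "\<dots> = (if i = k then 2 * Q k j else 0) + (if i + 2 = k then 2 * Q (k - 2) (j + 2 * N) else 0)"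
    proof -
      have "i = k \<or> i + 2 = k \<or> odd (i + k) \<or>
          even (i + k) \<and> k + 2 \<le> i \<or> even (i + k) \<and> i + 4 \<le> k"
        by presburger
      then consider "i = k" | "i + 2 = k" | "odd (i + k)" | "even (i + k)" "k + 2 \<le> i" | "even (i + k)" "i + 4 \<le> k"
        by blast
      then show ?thesis
      proof cases
        case 1
        then show ?thesis by simp
      next
        case 2
        then have "N * k = N * i + 2 * N" "k - 2 = i" "even (i + k)"
          by (auto simp: algebra_simps)
        with 2 show ?thesis by (simp add: add.commute)
      next
        case 3
        then have "i \<noteq> k" "i + 2 \<noteq> k" by auto
        with 3 show ?thesis by simp
      next
        case 4
        then have "N * k + 2 * N \<le> N * i" using mult_le_mono2[of "k + 2" i N] by (simp add: algebra_simps)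
        with 4 \<open>j < 2 * N\<close> show ?thesis by auto
      next
        case 5
        then have "N * i + 4 * N \<le> N * k" using mult_le_mono2[of "i + 4" k N] by (simp add: algebra_simps)
        with 5 Q_N[of "?d - N * i" i] show ?thesis by auto
      qed
    qed
    finally show ?thesis .
  qed
  have "kronecker_coeff N K Q ?d + (-1) ^ k * kronecker_coeff N K (\<lambda>i j. (-1) ^ i * Q i j) ?d =
      (\<Sum>i<K. if i = k then 2 * Q k j else 0) + (\<Sum>i<K. if i + 2 = k then 2 * Q (k - 2) (j + 2 * N) else 0)"
    unfolding kronecker_coeff_def sum_distrib_left sum.distrib[symmetric] summand ..
  also have "\<dots> = 2 * (Q k j + (if 2 \<le> k then Q (k - 2) (j + 2 * N) else 0))"
  proof (cases "2 \<le> k")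
    case True
    then obtain m where "k = m + 2" by (metis add.commute le_Suc_ex)
    then show ?thesis using Q_K by (auto simp: sum.delta sum.delta' algebra_simps)
  next
    case False
    then show ?thesis using Q_K by (auto simp: sum.delta algebra_simps)
  qed
  finally show ?thesis .
qed

lemma kronecker_coeff_eq_0:
  assumes "\<And>i j. L \<le> j \<Longrightarrow> e i j = 0" and "N * (K - 1) + L \<le> d"
  shows "kronecker_coeff N K e d = 0"
  unfolding kronecker_coeff_def
proof (intro sum.neutral ballI)
  fix i assume "i \<in> {..<K}"
  then have "N * i \<le> N * (K - 1)" by (intro mult_le_mono2) simp
  with assms(2) have "L \<le> d - N * i" by linarith
  with assms(1) show "(if N * i \<le> d then e i (d - N * i) else 0) = 0" by simp
qed

lemma has_len2_iff: "has_len2 lx ly p \<longleftrightarrow> has_len ly p \<and> (\<forall>i. has_len lx (coeff p i))"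
  by (auto simp: has_len2_def has_len_def)

lemma poly_eq_sum_has_len:
  fixes p :: "'a::comm_semiring_1 poly"
  assumes "has_len K p"
  shows "poly p x = (\<Sum>i<K. coeff p i * x ^ i)"
proof -
  have "degree p < K \<or> p = 0"
    using assms by (metis has_len_def leading_coeff_0_iff not_le)
  then show ?thesis
  proof
    assume "degree p < K"
    then have "(\<Sum>i\<le>degree p. coeff p i * x ^ i) = (\<Sum>i<K. coeff p i * x ^ i)"
      by (intro sum.mono_neutral_left) (auto simp: coeff_eq_0)
    then show ?thesis
      by (simp add: poly_altdef)
  qed simp
qed

lemma coeff_sub_pos:
  assumes "has_len K p"
  shows "coeff (sub_pos N s p) d = kronecker_coeff N K (\<lambda>i j. s ^ i * coeff (coeff p i) j) d"
proof -
  have "sub_pos N s p = (\<Sum>i<K. monom (s ^ i) (N * i) * coeff p i)"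
    unfolding sub_pos_def poly_eq_sum_has_len[OF assms] monom_power by (simp add: ac_simps)
  then show ?thesis
    unfolding kronecker_coeff_def by (auto simp: coeff_sum coeff_monom_mult intro!: sum.cong)
qed

lemma coeff_sub_rev:
  "coeff (sub_rev N l s p) d =
    kronecker_coeff N l (\<lambda>i j. if i < l then s ^ (l - 1 - i) * coeff (coeff p (l - 1 - i)) j else 0) d"
proof -
  have "coeff (sub_rev N l s p) d =
      (\<Sum>i<l. if N * (l - 1 - i) \<le> d then s ^ i * coeff (coeff p i) (d - N * (l - 1 - i)) else 0)"
    unfolding sub_rev_def coeff_sum coeff_smult mult.commute[of _ "monom 1 _"] coeff_monom_mult
    by (intro sum.cong) auto
  also have "\<dots> = kronecker_coeff N l (\<lambda>i j. if i < l then s ^ (l - 1 - i) * coeff (coeff p (l - 1 - i)) j else 0) d"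
    unfolding kronecker_coeff_def by (subst sum.nat_diff_reindex[symmetric]) (intro sum.cong; simp add: Suc_diff_Suc)
  finally show ?thesis .
qed

lemma has_len_sub_pos:
  assumes "has_len2 Lx Ly p" and "N * (Ly - 1) + Lx \<le> M"
  shows "has_len M (sub_pos N s p)"
  unfolding has_len_def
proof (intro allI impI)
  fix d assume "M \<le> d"
  have "has_len Ly p" using assms(1) by (simp add: has_len2_iff)
  with assms \<open>M \<le> d\<close> show "coeff (sub_pos N s p) d = 0"
    unfolding coeff_sub_pos[OF \<open>has_len Ly p\<close>]
    by (intro kronecker_coeff_eq_0[of Lx]) (auto simp: has_len2_def has_len_def)
qed

lemma has_len_sub_rev:
  assumes "has_len2 Lx Ly p" and "N * (Ly - 1) + Lx \<le> M"
  shows "has_len M (sub_rev N Ly s p)"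
  unfolding has_len_def
proof (intro allI impI)
  fix d assume "M \<le> d"
  with assms show "coeff (sub_rev N Ly s p) d = 0"
    unfolding coeff_sub_rev by (intro kronecker_coeff_eq_0[of Lx]) (auto simp: has_len2_def)
qed

lemma has_len_mult:
  fixes p q :: "'a::comm_semiring_0 poly"
  assumes "has_len a p" "has_len b q"
  shows "has_len (a + b - 1) (p * q)"
  unfolding has_len_def coeff_mult
proof (intro allI impI sum.neutral ballI)
  fix n i assume "a + b - 1 \<le> n" "i \<in> {..n}"
  then have "coeff p i = 0 \<or> coeff q (n - i) = 0"
    using assms unfolding has_len_def by (cases "a \<le> i") auto
  then show "coeff p i * coeff q (n - i) = 0" by auto
qed

lemma has_len_sum: "(\<And>x. x \<in> A \<Longrightarrow> has_len l (f x)) \<Longrightarrow> has_len l (\<Sum>x\<in>A. f x)"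
  by (simp add: has_len_def coeff_sum)

lemma has_len2_mult:
  fixes f g :: "'a::comm_semiring_0 poly poly"
  assumes "has_len2 a b f" "has_len2 c d g"
  shows "has_len2 (a + c - 1) (b + d - 1) (f * g)"
proof -
  have "has_len (a + c - 1) (coeff (f * g) k)" for k
    unfolding coeff_mult using assms by (intro has_len_sum has_len_mult) (simp_all add: has_len2_iff)
  moreover have "has_len (b + d - 1) (f * g)"
    using assms by (intro has_len_mult) (simp_all add: has_len2_iff)
  ultimately show ?thesis by (simp add: has_len2_iff)
qed

lemma sum_monom_has_len:
  assumes "has_len l p"
  shows "(\<Sum>i<l. monom (coeff p i) i) = p"
  using assms by (auto simp: poly_eq_iff coeff_sum coeff_monom has_len_def)

(* The value at (a, b) of the homogenization of degree l - 1 of p. *)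
definition poly_hom :: "nat \<Rightarrow> 'a::comm_semiring_1 \<Rightarrow> 'a \<Rightarrow> 'a poly \<Rightarrow> 'a" where
  "poly_hom l a b p = (\<Sum>i<l. coeff p i * a ^ i * b ^ (l - 1 - i))"

lemma poly_hom_sum: "poly_hom l a b (\<Sum>x\<in>A. f x) = (\<Sum>x\<in>A. poly_hom l a b (f x))"
  unfolding poly_hom_def coeff_sum sum_distrib_right by (rule sum.swap)

lemma poly_hom_monom: "i < l \<Longrightarrow> poly_hom l a b (monom c i) = c * a ^ i * b ^ (l - 1 - i)"
  unfolding poly_hom_def coeff_monom by (simp add: if_distrib[of "\<lambda>x. x * _"] cong: if_cong)

lemma poly_hom_mult:
  fixes p q :: "'a::comm_semiring_1 poly"
  assumes "has_len l1 p" "has_len l2 q"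
  shows "poly_hom (l1 + l2 - 1) a b (p * q) = poly_hom l1 a b p * poly_hom l2 a b q"
proof -
  have "p * q = (\<Sum>i<l1. monom (coeff p i) i) * (\<Sum>j<l2. monom (coeff q j) j)"
    using assms by (simp add: sum_monom_has_len)
  also have "\<dots> = (\<Sum>i<l1. \<Sum>j<l2. monom (coeff p i * coeff q j) (i + j))"
    by (simp add: sum_product mult_monom)
  finally have "poly_hom (l1 + l2 - 1) a b (p * q) =
      (\<Sum>i<l1. \<Sum>j<l2. poly_hom (l1 + l2 - 1) a b (monom (coeff p i * coeff q j) (i + j)))"
    by (simp add: poly_hom_sum)
  also have "\<dots> = (\<Sum>i<l1. \<Sum>j<l2. (coeff p i * a ^ i * b ^ (l1 - 1 - i)) * (coeff q j * a ^ j * b ^ (l2 - 1 - j)))"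
  proof (intro sum.cong refl)
    fix i j assume "i \<in> {..<l1}" "j \<in> {..<l2}"
    then have "l1 + l2 - 1 - 1 - (i + j) = (l1 - 1 - i) + (l2 - 1 - j)" "i + j < l1 + l2 - 1" by auto
    then show "poly_hom (l1 + l2 - 1) a b (monom (coeff p i * coeff q j) (i + j)) =
        (coeff p i * a ^ i * b ^ (l1 - 1 - i)) * (coeff q j * a ^ j * b ^ (l2 - 1 - j))"
      by (simp only: poly_hom_monom power_add ac_simps)
  qed
  also have "\<dots> = poly_hom l1 a b p * poly_hom l2 a b q"
    by (simp add: poly_hom_def sum_product)
  finally show ?thesis .
qed

lemma sub_pos_mult: "sub_pos N s (p * q) = sub_pos N s p * sub_pos N s q"
  by (simp add: sub_pos_def poly_mult)

lemma sub_rev_eq_poly_hom: "sub_rev N l s p = poly_hom l [:s:] (monom 1 N) p"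
  by (simp add: sub_rev_def poly_hom_def monom_power poly_const_pow ac_simps)

lemma sub_rev_mult:
  assumes "has_len l1 p" "has_len l2 q"
  shows "sub_rev N (l1 + l2 - 1) s (p * q) = sub_rev N l1 s p * sub_rev N l2 s q"
  unfolding sub_rev_eq_poly_hom using assms by (rule poly_hom_mult)

section \<open>The four-point Kronecker substitution\<close>

lemma length_concat_coeff_list: "length (concat (map (coeff_list L) ps)) = L * length ps"
  by (induction ps) (simp_all add: coeff_list_def)

lemma nth_concat_coeff_list:
  assumes "q < length ps" "d < L"
  shows "concat (map (coeff_list L) ps) ! (q * L + d) = coeff (ps ! q) d"
  using assms
proof (induction ps arbitrary: q)
  case (Cons p ps)
  then show ?case
    by (cases q) (simp_all add: coeff_list_def nth_append add.assoc)
qed simp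

lemma nth_concat_coeff_list_div_mod:
  assumes "u < L * length ps"
  shows "concat (map (coeff_list L) ps) ! u = coeff (ps ! (u div L)) (u mod L)"
proof -
  have "0 < L" using assms by (cases L) auto
  moreover have "u div L < length ps"
    using assms by (simp add: less_mult_imp_div_less mult.commute)
  ultimately show ?thesis
    using nth_concat_coeff_list[of "u div L" ps "u mod L" L] by simp
qed

lemma coeff_list2_conv_concat: "coeff_list2 lx ly p = concat (map (coeff_list lx) (map (coeff p) [0..<ly]))"
  by (simp add: coeff_list2_def comp_def)

lemma kronecker_coeff_cong:
  "(\<And>i j. i < K \<Longrightarrow> e i j = e' i j) \<Longrightarrow> kronecker_coeff N K e d = kronecker_coeff N K e' d"
  unfolding kronecker_coeff_def by (intro sum.cong) auto

definition subst_poly :: "nat \<Rightarrow> nat \<Rightarrow> bool \<Rightarrow> 'a::comm_ring_1 \<Rightarrow> 'a poly poly \<Rightarrow> 'a poly" where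
  "subst_poly N l rvs s p = (if rvs then sub_rev N l s p else sub_pos N s p)"

definition subst_entry :: "nat \<Rightarrow> bool \<Rightarrow> 'a::comm_ring_1 \<Rightarrow> 'a poly poly \<Rightarrow> nat \<Rightarrow> nat \<Rightarrow> 'a" where
  "subst_entry l rvs s p i j =
     (let i' = if rvs then l - 1 - i else i in if i < l then s ^ i' * coeff (coeff p i') j else 0)"

lemma coeff_subst_poly:
  assumes "has_len l p"
  shows "coeff (subst_poly N l rvs s p) d = kronecker_coeff N l (subst_entry l rvs s p) d"
  using assms by (auto simp: subst_poly_def subst_entry_def Let_def coeff_sub_pos coeff_sub_rev intro!: kronecker_coeff_cong)

lemma coeff_subst_poly_two_terms:
  assumes "has_len2 Lx l p" "Lx \<le> 2 * N" "j < N"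
  shows "coeff (subst_poly N l rvs s p) (N * k + j) =
    subst_entry l rvs s p k j + (if 1 \<le> k then subst_entry l rvs s p (k - 1) (j + N) else 0)"
  using assms unfolding coeff_subst_poly[OF assms(1)[unfolded has_len2_iff, THEN conjunct1]]
  by (intro kronecker_coeff_two_terms) (auto simp: subst_entry_def has_len2_def Let_def)

definition negate_if :: "bool \<Rightarrow> expr \<Rightarrow> expr" where
  "negate_if c x = (if c then Minus Zero x else x)"

(* Output block q < 8 of the substitution program substitutes into f if q < 4 and into g
   otherwise, is reversed iff q mod 4 \<ge> 2 and uses the sign -1 iff q is odd; the input lists the
   coefficients of f followed by those of g. *)
definition subst_entry_expr :: "nat \<Rightarrow> nat \<Rightarrow> nat \<Rightarrow> nat \<Rightarrow> nat \<Rightarrow> expr" where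
  "subst_entry_expr Lx Ly q i j = (let i' = if 2 \<le> q mod 4 then Ly - 1 - i else i in
     if i < Ly \<and> j < Lx then negate_if (odd q \<and> odd i') (Inp ((q div 4 * Ly + i') * Lx + j)) else Zero)"

definition substitution_expr :: "nat \<Rightarrow> nat \<Rightarrow> nat \<Rightarrow> expr" where
  "substitution_expr Lx Ly u = (let N = (Lx + 1) div 2; M = N * (Ly - 1) + Lx; q = u div M; d = u mod M in
     Plus (subst_entry_expr Lx Ly q (d div N) (d mod N))
       (if 1 \<le> d div N then subst_entry_expr Lx Ly q (d div N - 1) (d mod N + N) else Zero))"

lemma expr_cost_substitution_expr: "expr_cost (substitution_expr Lx Ly u) \<le> 7"
proof -
  have entry: "expr_cost (subst_entry_expr Lx Ly q i j) \<le> 3" for q i j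
    by (simp add: subst_entry_expr_def negate_if_def Let_def)
  then have "expr_cost (if c then subst_entry_expr Lx Ly q i j else Zero) \<le> 3" for c q i j
    by simp
  then show ?thesis
    unfolding substitution_expr_def Let_def expr_cost.simps
    by (rule order_trans[OF add_mono[OF add_mono[OF entry] order_refl]]) simp
qed

lemma refs_below_subst_entry_expr:
  assumes "q < 8"
  shows "refs_below (2 * Lx * Ly) no (subst_entry_expr Lx Ly q i j)"
proof -
  have "(b * Ly + i') * Lx + j < 2 * Lx * Ly" if "b \<le> 1" "i' < Ly" "j < Lx" for b i'
  proof -
    have "(b * Ly + i') * Lx + j < (b * Ly + i' + 1) * Lx" using that by simp
    also have "\<dots> \<le> 2 * Ly * Lx"
      using that by (intro mult_le_mono1) (cases b; simp)
    finally show ?thesis by (simp add: ac_simps)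
  qed
  with assms show ?thesis
    by (auto simp: subst_entry_expr_def negate_if_def Let_def)
qed

lemma eval_subst_entry_expr:
  fixes f g :: "'a::comm_ring_1 poly poly"
  assumes "has_len2 Lx Ly f" "has_len2 Lx Ly g" "q < 8"
  shows "eval_expr (coeff_list2 Lx Ly f @ coeff_list2 Lx Ly g) out (subst_entry_expr Lx Ly q i j) =
    subst_entry Ly (2 \<le> q mod 4) (if odd q then -1 else 1) (if q < 4 then f else g) i j"
proof (cases "i < Ly \<and> j < Lx")
  case True
  define i' where "i' = (if 2 \<le> q mod 4 then Ly - 1 - i else i)"
  let ?F = "if q < 4 then f else g" and ?ps = "map (coeff f) [0..<Ly] @ map (coeff g) [0..<Ly]"
  have "i' < Ly" using True by (simp add: i'_def)
  moreover have block: "q div 4 = (if q < 4 then 0 else 1)" using \<open>q < 8\<close> by auto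
  ultimately have "?ps ! (q div 4 * Ly + i') = coeff ?F i'" by (simp add: nth_append)
  moreover have "q div 4 * Ly + i' < length ?ps" using \<open>i' < Ly\<close> block by auto
  ultimately have "(coeff_list2 Lx Ly f @ coeff_list2 Lx Ly g) ! ((q div 4 * Ly + i') * Lx + j) =
      coeff (coeff ?F i') j"
    using True nth_concat_coeff_list[of _ ?ps j Lx] by (simp add: coeff_list2_conv_concat)
  with True show ?thesis
    by (simp add: subst_entry_expr_def subst_entry_def negate_if_def Let_def i'_def[symmetric]
        minus_one_power_iff)
next
  case False
  with assms(1,2) show ?thesis
    by (auto simp: subst_entry_expr_def subst_entry_def Let_def has_len2_def)
qed

lemma length_coeff_list2: "length (coeff_list2 lx ly p) = lx * ly"
  unfolding coeff_list2_conv_concat length_concat_coeff_list by simp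

lemma substitution_targets_conv_map:
  "[sub_pos N 1 f, sub_pos N (-1) f, sub_rev N Ly 1 f, sub_rev N Ly (-1) f,
    sub_pos N 1 g, sub_pos N (-1) g, sub_rev N Ly 1 g, sub_rev N Ly (-1) g] =
   map (\<lambda>q. subst_poly N Ly (2 \<le> q mod 4) (if odd q then -1 else 1) (if q < 4 then f else g)) [0..<8]"
  by (simp add: subst_poly_def upt_rec)

definition substitution_slp :: "nat \<Rightarrow> nat \<Rightarrow> instr list \<times> nat list" where
  "substitution_slp Lx Ly =
     exprs_slp (2 * Lx * Ly) (8 * ((Lx + 1) div 2 * (Ly - 1) + Lx)) (substitution_expr Lx Ly)"

lemma length_substitution_slp:
  assumes "1 \<le> Ly"
  shows "length (fst (substitution_slp Lx Ly)) \<le> 56 * Lx * Ly"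
proof -
  let ?M = "(Lx + 1) div 2 * (Ly - 1) + Lx"
  have "(Lx + 1) div 2 * (Ly - 1) \<le> Lx * (Ly - 1)" by (intro mult_le_mono1) simp
  moreover have "Lx * (Ly - 1) + Lx = Lx * Ly" using assms by (cases Ly) simp_all
  ultimately have "?M \<le> Lx * Ly" by linarith
  moreover have "length (fst (substitution_slp Lx Ly)) \<le> 7 * (8 * ?M)"
    unfolding substitution_slp_def by (rule length_exprs_slp) (simp add: expr_cost_substitution_expr)
  ultimately show ?thesis by (simp add: mult.assoc)
qed

lemma substitution_slp_computes:
  fixes f g :: "'a::comm_ring_1 poly poly"
  assumes "1 \<le> Lx" "has_len2 Lx Ly f" "has_len2 Lx Ly g"
    and N: "N = (Lx + 1) div 2" and M: "M = N * (Ly - 1) + Lx"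
  shows "slp_computes (fst (substitution_slp Lx Ly)) (snd (substitution_slp Lx Ly))
    (coeff_list2 Lx Ly f @ coeff_list2 Lx Ly g)
    (concat (map (coeff_list M) [sub_pos N 1 f, sub_pos N (-1) f, sub_rev N Ly 1 f, sub_rev N Ly (-1) f,
       sub_pos N 1 g, sub_pos N (-1) g, sub_rev N Ly 1 g, sub_rev N Ly (-1) g]))"
    (is "slp_computes _ _ ?inp ?out")
  unfolding substitution_slp_def N[symmetric] M[symmetric]
proof (rule exprs_slp_computes)
  show "length ?inp = 2 * Lx * Ly" by (simp add: length_coeff_list2)
  show "length ?out = 8 * M" unfolding length_concat_coeff_list by simp
  show "\<forall>u<8 * M. refs_below (2 * Lx * Ly) u (substitution_expr Lx Ly u) \<and>
      eval_expr ?inp ?out (substitution_expr Lx Ly u) = ?out ! u"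
  proof (intro allI impI conjI)
    fix u assume "u < 8 * M"
    define q d where "q = u div M" and "d = u mod M"
    let ?e = "subst_entry Ly (2 \<le> q mod 4) (if odd q then -1 else 1) (if q < 4 then f else g)"
    have "q < 8" using \<open>u < 8 * M\<close> by (simp add: q_def less_mult_imp_div_less)
    have expr: "substitution_expr Lx Ly u = Plus (subst_entry_expr Lx Ly q (d div N) (d mod N))
        (if 1 \<le> d div N then subst_entry_expr Lx Ly q (d div N - 1) (d mod N + N) else Zero)"
      by (simp add: substitution_expr_def Let_def N M q_def d_def)
    show "refs_below (2 * Lx * Ly) u (substitution_expr Lx Ly u)"
      unfolding expr using \<open>q < 8\<close> by (simp add: refs_below_subst_entry_expr)
    have "?out ! u = coeff (subst_poly N Ly (2 \<le> q mod 4) (if odd q then -1 else 1) (if q < 4 then f else g)) d"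
      unfolding substitution_targets_conv_map q_def d_def
      by (subst nth_concat_coeff_list_div_mod)
        (use \<open>u < 8 * M\<close> \<open>q < 8\<close> in \<open>simp_all add: q_def mult.commute\<close>)
    also have "\<dots> = ?e (d div N) (d mod N) + (if 1 \<le> d div N then ?e (d div N - 1) (d mod N + N) else 0)"
    proof -
      have "0 < N" "Lx \<le> 2 * N" "has_len2 Lx Ly (if q < 4 then f else g)"
        using assms(1-3) N by auto
      from coeff_subst_poly_two_terms[OF this(3,2) mod_less_divisor[OF this(1), of d], where k="d div N"]
      show ?thesis by (simp only: mult_div_mod_eq)
    qed
    also have "\<dots> = eval_expr ?inp ?out (substitution_expr Lx Ly u)"
      unfolding expr using assms(2,3) \<open>q < 8\<close> by (simp add: eval_subst_entry_expr)
    finally show "eval_expr ?inp ?out (substitution_expr Lx Ly u) = ?out ! u" ..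
  qed
qed

lemma half_double:
  assumes "inj (\<lambda>r::'a::comm_ring_1. 2 * r)"
  shows "half (2 * x) = (x::'a)"
  unfolding half_def using assms by (auto simp: inj_def intro: the_equality)

lemma recover_coeff_low:
  fixes h :: "'a::comm_ring_1 poly poly"
  assumes "inj (\<lambda>r::'a. 2 * r)" "has_len2 W K h" "W \<le> 4 * N" "j < 2 * N"
  shows "coeff (coeff h k) j =
    half (coeff (sub_pos N 1 h) (N * k + j) + (-1) ^ k * coeff (sub_pos N (-1) h) (N * k + j)) -
    (if 2 \<le> k then coeff (coeff h (k - 2)) (j + 2 * N) else 0)"
proof -
  have "has_len K h" using assms(2) by (simp add: has_len2_iff)
  then have "coeff (sub_pos N 1 h) (N * k + j) + (-1) ^ k * coeff (sub_pos N (-1) h) (N * k + j) =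
      2 * (coeff (coeff h k) j + (if 2 \<le> k then coeff (coeff h (k - 2)) (j + 2 * N) else 0))"
    unfolding coeff_sub_pos[OF \<open>has_len K h\<close>] power_one mult_1 using assms(2-4)
    by (intro kronecker_coeff_parity) (auto simp: has_len2_def)
  then show ?thesis by (simp only: half_double[OF assms(1)]) simp
qed

lemma recover_coeff_high:
  fixes h :: "'a::comm_ring_1 poly poly"
  assumes "inj (\<lambda>r::'a. 2 * r)" "has_len2 W K h" "odd K" "W \<le> 4 * N" "2 * N \<le> j" "j < W" "k < K"
  shows "coeff (coeff h k) j =
    half (coeff (sub_rev N K 1 h) (N * (K - 1 - k) + j) +
      (-1) ^ (K + 1 - k) * coeff (sub_rev N K (-1) h) (N * (K - 1 - k) + j)) -
    (if 2 \<le> k then coeff (coeff h (k - 2)) (j - 2 * N) else 0)"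
proof -
  define R where "R i j = (if i < K then coeff (coeff h (K - 1 - i)) j else 0)" for i j
  (* Row k of h is row K - 1 - k of R, so rows k' and k' - 2 of R are rows k - 2 and k of h. *)
  define k' where "k' = K + 1 - k"
  define d where "d = N * k' + (j - 2 * N)"
  have "(-1) ^ (K - 1 - i) = ((-1) ^ i :: 'a)" if "i < K" for i
    using that \<open>odd K\<close> by (simp add: minus_one_power_iff)
  then have "coeff (sub_rev N K 1 h) d + (-1) ^ k' * coeff (sub_rev N K (-1) h) d =
      kronecker_coeff N K R d + (-1) ^ k' * kronecker_coeff N K (\<lambda>i j. (-1) ^ i * R i j) d"
    unfolding coeff_sub_rev R_def by (simp cong: kronecker_coeff_cong)
  also have "\<dots> = 2 * (R k' (j - 2 * N) + (if 2 \<le> k' then R (k' - 2) (j - 2 * N + 2 * N) else 0))"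
    unfolding d_def using assms(2,4-6) by (intro kronecker_coeff_parity) (auto simp: R_def has_len2_def)
  also have "\<dots> = 2 * ((if 2 \<le> k then coeff (coeff h (k - 2)) (j - 2 * N) else 0) + coeff (coeff h k) j)"
    using assms(5,7) by (auto simp: R_def k'_def)
  finally have "half (coeff (sub_rev N K 1 h) d + (-1) ^ k' * coeff (sub_rev N K (-1) h) d) =
      (if 2 \<le> k then coeff (coeff h (k - 2)) (j - 2 * N) else 0) + coeff (coeff h k) j"
    by (simp only: half_double[OF assms(1)])
  moreover have "d = N * (K - 1 - k) + j"
  proof -
    have "k' = (K - 1 - k) + 2" using \<open>k < K\<close> by (simp add: k'_def)
    then show ?thesis using \<open>2 * N \<le> j\<close> by (simp add: d_def algebra_simps)
  qed
  ultimately show ?thesis by (simp add: k'_def)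
qed

definition halfsum_expr :: "nat \<Rightarrow> nat \<Rightarrow> nat \<Rightarrow> nat \<Rightarrow> expr" where
  "halfsum_expr Z b k d =
     Halve ((if even k then Plus else Minus) (Inp (2 * b * Z + d)) (Inp ((2 * b + 1) * Z + d)))"

(* Coefficient j of row k of h: for j < 2N it is read off the two positive substitutions, for
   j \<ge> 2N off the reversed ones, after removing the overlapping coefficient of row k - 2 that the
   program has already output. *)
definition recovery_expr :: "nat \<Rightarrow> nat \<Rightarrow> nat \<Rightarrow> expr" where
  "recovery_expr Lx Ly u = (let N = (Lx + 1) div 2; Z = 2 * (N * (Ly - 1) + Lx) - 1;
      W = 2 * Lx - 1; K = 2 * Ly - 1; k = u div W; j = u mod W;
      earlier = (\<lambda>j'. if 2 \<le> k \<and> j' < W then Out ((k - 2) * W + j') else Zero)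
    in if j < 2 * N then Minus (halfsum_expr Z 0 k (N * k + j)) (earlier (j + 2 * N))
       else Minus (halfsum_expr Z 1 (K + 1 - k) (N * (K - 1 - k) + j)) (earlier (j - 2 * N)))"

lemma expr_cost_recovery_expr: "expr_cost (recovery_expr Lx Ly u) \<le> 4"
  by (simp add: recovery_expr_def halfsum_expr_def Let_def)

lemma refs_below_halfsum_expr:
  "b \<le> 1 \<Longrightarrow> d < Z \<Longrightarrow> refs_below (4 * Z) no (halfsum_expr Z b k d)"
  by (cases b) (auto simp: halfsum_expr_def)

lemma eval_halfsum_expr:
  assumes "length ps = 4" "b \<le> 1" "d < Z"
  shows "eval_expr (concat (map (coeff_list Z) ps)) out (halfsum_expr Z b k d) =
    half (coeff (ps ! (2 * b)) d + (-1) ^ k * coeff (ps ! (2 * b + 1)) d)"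
  using assms nth_concat_coeff_list[of "2 * b" ps d Z] nth_concat_coeff_list[of "2 * b + 1" ps d Z]
  by (auto simp: halfsum_expr_def)

definition recovery_slp :: "nat \<Rightarrow> nat \<Rightarrow> instr list \<times> nat list" where
  "recovery_slp Lx Ly = exprs_slp (4 * (2 * ((Lx + 1) div 2 * (Ly - 1) + Lx) - 1))
     ((2 * Lx - 1) * (2 * Ly - 1)) (recovery_expr Lx Ly)"

lemma length_recovery_slp: "length (fst (recovery_slp Lx Ly)) \<le> 16 * Lx * Ly"
proof -
  have "length (fst (recovery_slp Lx Ly)) \<le> 4 * ((2 * Lx - 1) * (2 * Ly - 1))"
    unfolding recovery_slp_def by (rule length_exprs_slp) (simp add: expr_cost_recovery_expr)
  moreover have "(2 * Lx - 1) * (2 * Ly - 1) \<le> 4 * (Lx * Ly)"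
    using mult_le_mono[of "2 * Lx - 1" "2 * Lx" "2 * Ly - 1" "2 * Ly"] by simp
  ultimately show ?thesis by (simp add: mult.assoc)
qed

lemma recovery_slp_computes:
  fixes h :: "'a::comm_ring_1 poly poly"
  assumes inj: "inj (\<lambda>r::'a. 2 * r)" and "1 \<le> Lx" "1 \<le> Ly" and h: "has_len2 (2 * Lx - 1) (2 * Ly - 1) h"
    and N: "N = (Lx + 1) div 2" and M: "M = N * (Ly - 1) + Lx"
  shows "slp_computes (fst (recovery_slp Lx Ly)) (snd (recovery_slp Lx Ly))
    (concat (map (coeff_list (2 * M - 1))
      [sub_pos N 1 h, sub_pos N (-1) h, sub_rev N (2 * Ly - 1) 1 h, sub_rev N (2 * Ly - 1) (-1) h]))
    (coeff_list2 (2 * Lx - 1) (2 * Ly - 1) h)"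
    (is "slp_computes _ _ (concat (map (coeff_list _) ?ps)) ?out")
  unfolding recovery_slp_def N[symmetric] M[symmetric]
proof (rule exprs_slp_computes)
  define W K Z where "W = 2 * Lx - 1" and "K = 2 * Ly - 1" and "Z = 2 * M - 1"
  have "W \<le> 4 * N" "odd K" and Z: "Z = 2 * N * (Ly - 1) + W" using assms(2,3) N M by (auto simp: W_def K_def Z_def)
  show "length (concat (map (coeff_list (2 * M - 1)) ?ps)) = 4 * (2 * M - 1)"
    unfolding length_concat_coeff_list by simp
  show "length ?out = (2 * Lx - 1) * (2 * Ly - 1)"
    by (simp add: length_coeff_list2)
  show "\<forall>u<(2 * Lx - 1) * (2 * Ly - 1). refs_below (4 * (2 * M - 1)) u (recovery_expr Lx Ly u) \<and>
      eval_expr (concat (map (coeff_list (2 * M - 1)) ?ps)) ?out (recovery_expr Lx Ly u) = ?out ! u"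
  proof (intro allI impI conjI)
    fix u assume "u < (2 * Lx - 1) * (2 * Ly - 1)"
    define k j where "k = u div W" and "j = u mod W"
    have "u < K * W" "0 < W" using \<open>u < _\<close> assms(2) by (simp_all add: W_def K_def mult.commute)
    then have "k < K" "j < W" "u = k * W + j"
      by (simp_all add: k_def j_def less_mult_imp_div_less)
    have out_nth: "?out ! (i * W + j') = coeff (coeff h i) j'" if "i < K" "j' < W" for i j'
      using that nth_concat_coeff_list[of i "map (coeff h) [0..<K]" j' W]
      by (simp add: coeff_list2_conv_concat W_def K_def)
    define earlier where "earlier j' = (if 2 \<le> k \<and> j' < W then Out ((k - 2) * W + j') else Zero)" for j'
    have expr: "recovery_expr Lx Ly u = (if j < 2 * N
        then Minus (halfsum_expr Z 0 k (N * k + j)) (earlier (j + 2 * N))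
        else Minus (halfsum_expr Z 1 (K + 1 - k) (N * (K - 1 - k) + j)) (earlier (j - 2 * N)))"
      by (simp add: recovery_expr_def Let_def earlier_def k_def j_def W_def K_def Z_def N M)
    have "refs_below (4 * Z) u (earlier j')" for j'
    proof -
      have "(k - 2) * W + j' < u" if "2 \<le> k" "j' < W"
      proof -
        from that obtain m where "k = m + 2" by (metis add.commute le_Suc_ex)
        with that \<open>u = k * W + j\<close> show ?thesis by (simp add: algebra_simps)
      qed
      then show ?thesis by (simp add: earlier_def)
    qed
    moreover have "N * k + j < Z" "N * (K - 1 - k) + j < Z"
    proof -
      have "k \<le> 2 * (Ly - 1)" "K - 1 - k \<le> 2 * (Ly - 1)"
        using \<open>k < K\<close> by (simp_all add: K_def)
      then have "N * k \<le> 2 * N * (Ly - 1)" "N * (K - 1 - k) \<le> 2 * N * (Ly - 1)"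
        by (metis mult.assoc mult.left_commute mult_le_mono2)+
      with \<open>j < W\<close> Z show "N * k + j < Z" "N * (K - 1 - k) + j < Z" by linarith+
    qed
    ultimately show "refs_below (4 * (2 * M - 1)) u (recovery_expr Lx Ly u)"
      unfolding expr Z_def[symmetric] by (simp add: refs_below_halfsum_expr)
    have hWK: "has_len2 W K h" using h by (simp add: W_def K_def)
    have "eval_expr inp ?out (earlier j') = (if 2 \<le> k then coeff (coeff h (k - 2)) j' else 0)" for inp j'
      using hWK out_nth[of "k - 2" j'] \<open>k < K\<close> by (auto simp: earlier_def has_len2_def)
    moreover have "?out ! u = coeff (coeff h k) j"
      using out_nth \<open>k < K\<close> \<open>j < W\<close> \<open>u = k * W + j\<close> by simp
    moreover note eval_halfsum = eval_halfsum_expr[of ?ps _ _ Z ?out, unfolded Z_def[symmetric]]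
    ultimately show "eval_expr (concat (map (coeff_list (2 * M - 1)) ?ps)) ?out (recovery_expr Lx Ly u) = ?out ! u"
      using recover_coeff_low[OF inj hWK \<open>W \<le> 4 * N\<close>, of j k]
        recover_coeff_high[OF inj hWK \<open>odd K\<close> \<open>W \<le> 4 * N\<close> _ \<open>j < W\<close> \<open>k < K\<close>]
        \<open>N * k + j < Z\<close> \<open>N * (K - 1 - k) + j < Z\<close>
      unfolding expr Z_def[symmetric] by (auto simp: eval_halfsum K_def)
  qed
qed

theorem proposition2p4:
  fixes dummy :: "'a::comm_ring_1"
  assumes inj2: "inj (\<lambda>r::'a. 2 * r)"
  shows "\<exists>C::nat. \<forall>Lx Ly. 1 \<le> Lx \<longrightarrow> 1 \<le> Ly \<longrightarrow>
    (let N = (Lx + 1) div 2; M = N * (Ly - 1) + Lx in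
     \<exists>P1 O1 P2 O2. length P1 \<le> C * Lx * Ly \<and> length P2 \<le> C * Lx * Ly \<and>
      (\<forall>f g :: 'a poly poly. has_len2 Lx Ly f \<longrightarrow> has_len2 Lx Ly g \<longrightarrow>
        (let h = f * g;
             fp = sub_pos N 1 f; fm = sub_pos N (-1) f; frp = sub_rev N Ly 1 f; frm = sub_rev N Ly (-1) f;
             gp = sub_pos N 1 g; gm = sub_pos N (-1) g; grp = sub_rev N Ly 1 g; grm = sub_rev N Ly (-1) g
         in (\<forall>p\<in>{fp, fm, frp, frm, gp, gm, grp, grm}. has_len M p) \<and>
            sub_pos N 1 h = fp * gp \<and> sub_pos N (-1) h = fm * gm \<and>
            sub_rev N (2 * Ly - 1) 1 h = frp * grp \<and> sub_rev N (2 * Ly - 1) (-1) h = frm * grm \<and>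
            slp_computes P1 O1 (coeff_list2 Lx Ly f @ coeff_list2 Lx Ly g)
              (concat (map (coeff_list M) [fp, fm, frp, frm, gp, gm, grp, grm])) \<and>
            slp_computes P2 O2
              (concat (map (coeff_list (2 * M - 1)) [fp * gp, fm * gm, frp * grp, frm * grm]))
              (coeff_list2 (2 * Lx - 1) (2 * Ly - 1) h))))"
proof (intro exI[of _ 56] allI impI, goal_cases)
  case (1 Lx Ly)
  then have "1 \<le> Lx" "1 \<le> Ly" by simp_all
  define N M where "N = (Lx + 1) div 2" and "M = N * (Ly - 1) + Lx"
  have rev_mult: "sub_rev N (2 * Ly - 1) s (f * g) = sub_rev N Ly s f * sub_rev N Ly s g"
    if "has_len2 Lx Ly f" "has_len2 Lx Ly g" for s and f g :: "'a poly poly"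
    using sub_rev_mult[of Ly f Ly g] that by (simp add: has_len2_iff mult_2)
  show ?case
    unfolding Let_def N_def[symmetric] M_def[symmetric]
  proof (rule exI[of _ "fst (substitution_slp Lx Ly)"], rule exI[of _ "snd (substitution_slp Lx Ly)"],
      rule exI[of _ "fst (recovery_slp Lx Ly)"], rule exI[of _ "snd (recovery_slp Lx Ly)"],
      intro conjI allI impI, goal_cases)
    case 1
    show ?case using length_substitution_slp[OF \<open>1 \<le> Ly\<close>] .
  next
    case 2
    show ?case using length_recovery_slp[of Lx Ly] by simp
  next
    case (3 f g)
    then show ?case by (simp add: M_def has_len_sub_pos has_len_sub_rev)
  next
    case (8 f g)
    then show ?case by (rule substitution_slp_computes[OF \<open>1 \<le> Lx\<close> _ _ N_def M_def])
  next
    case (9 f g)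
    then have "has_len2 (2 * Lx - 1) (2 * Ly - 1) (f * g)"
      using has_len2_mult[of Lx Ly f Lx Ly g] by (simp add: mult_2)
    from recovery_slp_computes[OF inj2 \<open>1 \<le> Lx\<close> \<open>1 \<le> Ly\<close> this N_def M_def]
    show ?case by (simp only: sub_pos_mult rev_mult[OF 9])
  qed (simp_all only: sub_pos_mult rev_mult)
qed

end
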